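(* The radical $\mathcal{V}(D)$ of the form $\langle\cdot,\cdot\rangle$ is an ideal of $\mathcal{A}(D)$.
   Context: Let $G$ be a group generated by a conjugacy class $D$ of involutions such that for all $d,e\in D$ the order of $de$ is $1$, $2$ or $3$. Lines of the Fischer space on $D$ are triples $\{d,e,d^e\}$ with $d,e\in D$ non-commuting. $\mathcal{A}(D)$ is the $\mathbb{F}_2$-vector space with basis $D$ (finite subsets of $D$ under symmetric difference), with bilinear product determined by $d*e=d+e+f$ if $\{d,e,f\}$ is a line and $d*e=0$ otherwise. The bilinear form $\langle\cdot,\cdot\rangle$ on $\mathcal{A}(D)$ is determined by $\langle d,e\rangle=1$ if $d,e$ do not commute and $0$ otherwise; $\mathcal{V}(D)=\{u: \langle u,w\rangle=0\ \forall w\}$. *)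

theory Defs
  imports "HOL-Algebra.Algebra"
begin

definition fischer_class :: "('a, 'b) monoid_scheme \<Rightarrow> 'a set \<Rightarrow> bool" where
  "fischer_class G D \<longleftrightarrow>
     D \<subseteq> carrier G \<and>
     (\<exists>x\<in>carrier G. D = {g \<otimes>\<^bsub>G\<^esub> x \<otimes>\<^bsub>G\<^esub> inv\<^bsub>G\<^esub> g | g. g \<in> carrier G}) \<and>
     (\<forall>d\<in>D. d \<noteq> \<one>\<^bsub>G\<^esub> \<and> d \<otimes>\<^bsub>G\<^esub> d = \<one>\<^bsub>G\<^esub>) \<and>
     generate G D = carrier G \<and>
     (\<forall>d\<in>D. \<forall>e\<in>D. group.ord G (d \<otimes>\<^bsub>G\<^esub> e) \<in> {1, 2, 3})"

definition commute :: "('a, 'b) monoid_scheme \<Rightarrow> 'a \<Rightarrow> 'a \<Rightarrow> bool" where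
  "commute G d e \<longleftrightarrow> d \<otimes>\<^bsub>G\<^esub> e = e \<otimes>\<^bsub>G\<^esub> d"

definition conj :: "('a, 'b) monoid_scheme \<Rightarrow> 'a \<Rightarrow> 'a \<Rightarrow> 'a" where
  "conj G d e = inv\<^bsub>G\<^esub> e \<otimes>\<^bsub>G\<^esub> d \<otimes>\<^bsub>G\<^esub> e"

text \<open>Elements of A(D): finite subsets of D (F_2-vector space with basis D,
  addition = symmetric difference).\<close>
definition algA :: "'a set \<Rightarrow> 'a set set" where
  "algA D = {u. u \<subseteq> D \<and> finite u}"

definition symdiff :: "'a set \<Rightarrow> 'a set \<Rightarrow> 'a set" where
  "symdiff u w = (u - w) \<union> (w - u)"

text \<open>Product of basis elements: d*e = d+e+d^e if {d,e,d^e} is a line, 0 otherwise.\<close>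
definition basis_prod :: "('a, 'b) monoid_scheme \<Rightarrow> 'a \<Rightarrow> 'a \<Rightarrow> 'a set" where
  "basis_prod G d e = (if commute G d e then {} else {d, e, conj G d e})"

text \<open>Bilinear extension over F_2: x lies in u*w iff the number of pairs (d,e) in u \<times> w
  with x in d*e is odd.\<close>
definition algA_prod :: "('a, 'b) monoid_scheme \<Rightarrow> 'a set \<Rightarrow> 'a set \<Rightarrow> 'a set" where
  "algA_prod G u w = {x. odd (card {(d, e). d \<in> u \<and> e \<in> w \<and> x \<in> basis_prod G d e})}"

text \<open>Bilinear form with values in F_2 (True = 1): <u,w> is the parity of the number
  of non-commuting pairs in u \<times> w.\<close>
definition form :: "('a, 'b) monoid_scheme \<Rightarrow> 'a set \<Rightarrow> 'a set \<Rightarrow> bool" where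
  "form G u w \<longleftrightarrow> odd (card {(d, e). d \<in> u \<and> e \<in> w \<and> \<not> commute G d e})"

definition radical :: "('a, 'b) monoid_scheme \<Rightarrow> 'a set \<Rightarrow> 'a set set" where
  "radical G D = {u \<in> algA D. \<forall>w \<in> algA D. \<not> form G u w}"

definition is_ideal :: "('a, 'b) monoid_scheme \<Rightarrow> 'a set \<Rightarrow> 'a set set \<Rightarrow> bool" where
  "is_ideal G D I \<longleftrightarrow> I \<subseteq> algA D \<and> {} \<in> I \<and>
     (\<forall>u\<in>I. \<forall>w\<in>I. symdiff u w \<in> I) \<and>
     (\<forall>u\<in>I. \<forall>w\<in>algA D. algA_prod G u w \<in> I \<and> algA_prod G w u \<in> I)"

end

theory Submission
  imports Defs "HOL-Library.Z2"
begin

text \<open>Read the form and the product as \<open>\<bbbF>\<^sub>2\<close>-valued double sums over basis elements.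
  The form is then linear in each argument, so the radical is a subspace. The product is
  commutative, and the form is associative, \<open>\<langle>u*w, v\<rangle> = \<langle>u, w*v\<rangle>\<close>: by bilinearity this
  reduces to basis elements \<open>d, e, y \<in> D\<close>, where it is a case distinction on which pairs
  commute, using that \<open>d^e = e d e\<close> and that non-commuting \<open>d, e\<close> satisfy the braid relation
  \<open>d e d = e d e\<close> (their product has order 3). Hence \<open>\<langle>u*w, v\<rangle> = 0\<close> for \<open>u\<close> in the radical.\<close>

lemma of_nat_bit: "(of_nat n :: bit) = of_bool (odd n)"
  by (induction n) auto

lemma of_bool_bit_eq_iff: "((of_bool P :: bit) = of_bool Q) \<longleftrightarrow> (P \<longleftrightarrow> Q)"
  by (cases P; cases Q) simp_all

lemma of_nat_card_pairs_bit:
  assumes "finite u" "finite w"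
  shows "(of_nat (card {(d, e). d \<in> u \<and> e \<in> w \<and> P d e}) :: bit)
         = (\<Sum>d\<in>u. \<Sum>e\<in>w. of_bool (P d e))"
proof -
  have "{(d, e). d \<in> u \<and> e \<in> w \<and> P d e} = Sigma u (\<lambda>d. {e\<in>w. P d e})" by auto
  then have "card {(d, e). d \<in> u \<and> e \<in> w \<and> P d e} = (\<Sum>d\<in>u. card {e\<in>w. P d e})"
    using assms by simp
  then show ?thesis
    using assms by (simp add: Int_def conj_commute)
qed

lemma of_bool_form:
  assumes "finite u" "finite w"
  shows "(of_bool (form G u w) :: bit) = (\<Sum>d\<in>u. \<Sum>e\<in>w. of_bool (\<not> commute G d e))"
  using of_nat_card_pairs_bit[OF assms, of "\<lambda>d e. \<not> commute G d e"]
  by (simp add: form_def of_nat_bit)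

lemma of_bool_mem_algA_prod:
  assumes "finite u" "finite w"
  shows "(of_bool (x \<in> algA_prod G u w) :: bit)
         = (\<Sum>d\<in>u. \<Sum>e\<in>w. of_bool (x \<in> basis_prod G d e))"
  using of_nat_card_pairs_bit[OF assms, of "\<lambda>d e. x \<in> basis_prod G d e"]
  by (simp add: algA_prod_def of_nat_bit)

lemma finite_basis_prod: "finite (basis_prod G d e)"
  by (simp add: basis_prod_def)

lemma algA_prod_subset: "algA_prod G u w \<subseteq> (\<Union>d\<in>u. \<Union>e\<in>w. basis_prod G d e)"
proof
  fix x assume "x \<in> algA_prod G u w"
  then have "{(d, e). d \<in> u \<and> e \<in> w \<and> x \<in> basis_prod G d e} \<noteq> {}"
    unfolding algA_prod_def by (auto dest: odd_card_imp_not_empty)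
  then show "x \<in> (\<Union>d\<in>u. \<Union>e\<in>w. basis_prod G d e)" by auto
qed

lemma finite_algA_prod: "finite u \<Longrightarrow> finite w \<Longrightarrow> finite (algA_prod G u w)"
  by (rule finite_subset[OF algA_prod_subset]) (auto simp: finite_basis_prod)

lemma sum_of_bool_mem_mult:
  fixes f :: "'a \<Rightarrow> 'b::semiring_1"
  assumes "finite S" "A \<subseteq> S"
  shows "(\<Sum>x\<in>S. of_bool (x \<in> A) * f x) = sum f A"
  using assms by (simp add: Int_absorb1)

lemma sum_algA_prod:
  fixes f :: "'a \<Rightarrow> bit"
  assumes u: "finite u" and w: "finite w"
  shows "(\<Sum>x\<in>algA_prod G u w. f x) = (\<Sum>d\<in>u. \<Sum>e\<in>w. \<Sum>x\<in>basis_prod G d e. f x)"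
proof -
  define S where "S = (\<Union>d\<in>u. \<Union>e\<in>w. basis_prod G d e)"
  have S: "finite S" unfolding S_def using u w by (auto simp: finite_basis_prod)
  have "(\<Sum>x\<in>algA_prod G u w. f x) = (\<Sum>x\<in>S. of_bool (x \<in> algA_prod G u w) * f x)"
    using S algA_prod_subset[of G u w] by (simp only: S_def sum_of_bool_mem_mult)
  also have "\<dots> = (\<Sum>x\<in>S. \<Sum>d\<in>u. \<Sum>e\<in>w. of_bool (x \<in> basis_prod G d e) * f x)"
    by (simp only: of_bool_mem_algA_prod[OF u w] sum_distrib_right)
  also have "\<dots> = (\<Sum>d\<in>u. \<Sum>e\<in>w. \<Sum>x\<in>S. of_bool (x \<in> basis_prod G d e) * f x)"
    by (subst sum.swap) (simp only: sum.swap[of _ S])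
  also have "\<dots> = (\<Sum>d\<in>u. \<Sum>e\<in>w. \<Sum>x\<in>basis_prod G d e. f x)"
    by (intro sum.cong refl sum_of_bool_mem_mult S) (auto simp: S_def)
  finally show ?thesis .
qed

lemma sum_symdiff_bit:
  fixes f :: "'a \<Rightarrow> bit"
  assumes u: "finite u" and w: "finite w"
  shows "(\<Sum>x\<in>symdiff u w. f x) = (\<Sum>x\<in>u. f x) + (\<Sum>x\<in>w. f x)"
proof -
  have cancel: "(c + a) + (c + b) = a + b" for a b c :: bit
    by (cases a; cases b; cases c) simp_all
  have "sum f (symdiff u w) = sum f (u - w) + sum f (w - u)"
    unfolding symdiff_def by (rule sum.union_disjoint) (use u w in auto)
  also have "\<dots> = (sum f (u \<inter> w) + sum f (u - w)) + (sum f (w \<inter> u) + sum f (w - u))"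
    by (simp only: Int_commute[of w u] cancel)
  also have "\<dots> = sum f u + sum f w"
    by (simp only: sum.Int_Diff[OF u, symmetric] sum.Int_Diff[OF w, symmetric])
  finally show ?thesis .
qed

lemma form_symdiff_left:
  assumes "finite u" "finite w" "finite v"
  shows "(of_bool (form G (symdiff u w) v) :: bit) = of_bool (form G u v) + of_bool (form G w v)"
proof -
  have "finite (symdiff u w)" using assms by (simp add: symdiff_def)
  with assms show ?thesis by (simp only: of_bool_form sum_symdiff_bit)
qed

lemma commute_sym: "commute G a b \<longleftrightarrow> commute G b a"
  by (auto simp: commute_def)

context group
begin

lemma inv_involution: "c \<in> carrier G \<Longrightarrow> c \<otimes> c = \<one> \<Longrightarrow> inv c = c"
  using inv_equality by blast

lemma involution_cancel: "c \<in> carrier G \<Longrightarrow> c \<otimes> c = \<one> \<Longrightarrow> x \<in> carrier G \<Longrightarrow> c \<otimes> (c \<otimes> x) = x"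
  by (metis l_one m_assoc)

lemma involution_conj_conj:
  "a \<in> carrier G \<Longrightarrow> c \<in> carrier G \<Longrightarrow> c \<otimes> c = \<one> \<Longrightarrow> c \<otimes> (c \<otimes> a \<otimes> c) \<otimes> c = a"
  by (simp add: m_assoc involution_cancel)

lemma commute_involution_conj:
  assumes a: "a \<in> carrier G" and b: "b \<in> carrier G" and c: "c \<in> carrier G" and cc: "c \<otimes> c = \<one>"
    and ab: "commute G a b"
  shows "commute G (c \<otimes> a \<otimes> c) (c \<otimes> b \<otimes> c)"
proof -
  have "(c \<otimes> a \<otimes> c) \<otimes> (c \<otimes> b \<otimes> c) = c \<otimes> (a \<otimes> b) \<otimes> c"
    "(c \<otimes> b \<otimes> c) \<otimes> (c \<otimes> a \<otimes> c) = c \<otimes> (b \<otimes> a) \<otimes> c"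
    using a b c cc by (simp_all add: m_assoc involution_cancel)
  with ab show ?thesis unfolding commute_def by simp
qed

lemma commute_involution_conj_iff:
  assumes a: "a \<in> carrier G" and b: "b \<in> carrier G" and c: "c \<in> carrier G" and cc: "c \<otimes> c = \<one>"
  shows "commute G (c \<otimes> a \<otimes> c) b \<longleftrightarrow> commute G a (c \<otimes> b \<otimes> c)"
proof
  assume "commute G (c \<otimes> a \<otimes> c) b"
  from commute_involution_conj[OF _ b c cc this] a c cc show "commute G a (c \<otimes> b \<otimes> c)"
    by (simp add: involution_conj_conj)
next
  assume "commute G a (c \<otimes> b \<otimes> c)"
  from commute_involution_conj[OF a _ c cc this] b c cc show "commute G (c \<otimes> a \<otimes> c) b"
    by (simp add: involution_conj_conj)
qed

lemma involution_conj_eq_if_commute: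
  "a \<in> carrier G \<Longrightarrow> b \<in> carrier G \<Longrightarrow> a \<otimes> a = \<one> \<Longrightarrow> commute G a b \<Longrightarrow> a \<otimes> b \<otimes> a = b"
  unfolding commute_def by (metis involution_cancel m_assoc)

lemma involution_conj_ne_if_not_commute:
  assumes d: "d \<in> carrier G" and e: "e \<in> carrier G" and ee: "e \<otimes> e = \<one>"
    and nc: "\<not> commute G d e"
  shows "e \<otimes> d \<otimes> e \<noteq> d" "e \<otimes> d \<otimes> e \<noteq> e"
proof -
  show "e \<otimes> d \<otimes> e \<noteq> d"
  proof
    assume "e \<otimes> d \<otimes> e = d"
    moreover have "e \<otimes> (e \<otimes> d \<otimes> e) = d \<otimes> e" using d e ee by (simp add: m_assoc involution_cancel)
    ultimately show False using nc by (simp add: commute_def)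
  qed
  show "e \<otimes> d \<otimes> e \<noteq> e"
  proof
    assume "e \<otimes> d \<otimes> e = e"
    with involution_conj_conj[OF d e ee] e ee have "d = e" by (simp add: involution_cancel)
    then show False using nc by (simp add: commute_def)
  qed
qed

lemma braid_relation:
  assumes d: "d \<in> carrier G" and e: "e \<in> carrier G" and dd: "d \<otimes> d = \<one>" and ee: "e \<otimes> e = \<one>"
    and ord: "ord (d \<otimes> e) \<in> {1, 2, 3}" and nc: "\<not> commute G d e"
  shows "d \<otimes> e \<otimes> d = e \<otimes> d \<otimes> e"
proof -
  have de: "d \<otimes> e \<in> carrier G" using d e by simp
  have pow: "(d \<otimes> e) [^] ord (d \<otimes> e) = \<one>" using de by simp
  have inv_de: "(d \<otimes> e) \<otimes> (e \<otimes> d) = \<one>" using d e dd ee by (simp add: m_assoc involution_cancel)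
  have "ord (d \<otimes> e) \<noteq> 1"
  proof
    assume "ord (d \<otimes> e) = 1"
    with pow de dd have "d \<otimes> e = d \<otimes> d" by simp
    with d e nc show False by (simp add: commute_def)
  qed
  moreover have "ord (d \<otimes> e) \<noteq> 2"
  proof
    assume "ord (d \<otimes> e) = 2"
    with pow de inv_de have "(d \<otimes> e) \<otimes> (d \<otimes> e) = (d \<otimes> e) \<otimes> (e \<otimes> d)"
      by (simp add: numeral_2_eq_2)
    with d e nc show False by (simp add: commute_def)
  qed
  ultimately have "ord (d \<otimes> e) = 3" using ord by auto
  with pow de have "(d \<otimes> e \<otimes> d) \<otimes> (e \<otimes> d \<otimes> e) = \<one>"
    using d e by (simp add: numeral_3_eq_3 m_assoc)
  moreover have "(e \<otimes> d \<otimes> e) \<otimes> (e \<otimes> d \<otimes> e) = \<one>"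
    using d e dd ee by (simp add: m_assoc involution_cancel)
  ultimately show ?thesis using d e by (metis m_closed r_cancel)
qed

end

locale fischer = group G for G (structure) +
  fixes D
  assumes fischer_class: "fischer_class G D"
begin

lemma D_carrier: "d \<in> D \<Longrightarrow> d \<in> carrier G"
  using fischer_class by (auto simp: fischer_class_def)

lemma D_involution: "d \<in> D \<Longrightarrow> d \<otimes> d = \<one>"
  using fischer_class by (auto simp: fischer_class_def)

lemma conj_D_eq: "d \<in> D \<Longrightarrow> e \<in> D \<Longrightarrow> conj G d e = e \<otimes> d \<otimes> e"
  by (simp add: conj_def inv_involution D_carrier D_involution)

lemma braid_D:
  assumes d: "d \<in> D" and e: "e \<in> D" and nc: "\<not> commute G d e"
  shows "d \<otimes> e \<otimes> d = e \<otimes> d \<otimes> e"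
proof (rule braid_relation[OF D_carrier[OF d] D_carrier[OF e] D_involution[OF d] D_involution[OF e] _ nc])
  show "ord (d \<otimes> e) \<in> {1, 2, 3}"
    using fischer_class d e unfolding fischer_class_def by blast
qed

lemma conj_mem_D:
  assumes d: "d \<in> D" and e: "e \<in> D"
  shows "conj G d e \<in> D"
proof -
  obtain x where x: "x \<in> carrier G" and Dx: "D = {g \<otimes> x \<otimes> inv g | g. g \<in> carrier G}"
    using fischer_class by (auto simp: fischer_class_def)
  from d Dx obtain g where g: "g \<in> carrier G" and dg: "d = g \<otimes> x \<otimes> inv g" by auto
  have ec: "e \<in> carrier G" using e D_carrier by simp
  have "conj G d e = (inv e \<otimes> g) \<otimes> x \<otimes> inv (inv e \<otimes> g)"
    using g x ec by (simp add: conj_def dg m_assoc inv_mult_group)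
  moreover have "inv e \<otimes> g \<in> carrier G" using g ec by simp
  ultimately show ?thesis using Dx by auto
qed

lemma basis_prod_subset_D: "d \<in> D \<Longrightarrow> e \<in> D \<Longrightarrow> basis_prod G d e \<subseteq> D"
  by (auto simp: basis_prod_def conj_mem_D)

lemma basis_prod_commute: "d \<in> D \<Longrightarrow> e \<in> D \<Longrightarrow> basis_prod G d e = basis_prod G e d"
  using braid_D[of d e] by (auto simp: basis_prod_def conj_D_eq commute_sym)

lemma sum_basis_prod_not_commute:
  fixes h :: "'a \<Rightarrow> 'c::comm_monoid_add"
  assumes d: "d \<in> D" and e: "e \<in> D" and nc: "\<not> commute G d e"
  shows "(\<Sum>x\<in>basis_prod G d e. h x) = h d + h e + h (e \<otimes> d \<otimes> e)"
proof -
  have "e \<otimes> d \<otimes> e \<noteq> d" "e \<otimes> d \<otimes> e \<noteq> e" "d \<noteq> e"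
    using involution_conj_ne_if_not_commute[OF _ _ _ nc] nc d e
    by (auto simp: D_carrier D_involution commute_def)
  moreover have "basis_prod G d e = {d, e, e \<otimes> d \<otimes> e}"
    using d e nc by (simp add: basis_prod_def conj_D_eq)
  ultimately show ?thesis by (simp add: add.assoc)
qed

abbreviation noncomm :: "'a \<Rightarrow> 'a \<Rightarrow> bit" where
  "noncomm a b \<equiv> of_bool (\<not> commute G a b)"

lemma basis_form_assoc:
  assumes d: "d \<in> D" and e: "e \<in> D" and y: "y \<in> D"
  shows "(\<Sum>x\<in>basis_prod G d e. noncomm x y) = (\<Sum>z\<in>basis_prod G e y. noncomm d z)"
proof -
  have dc: "d \<in> carrier G" and ec: "e \<in> carrier G" and yc: "y \<in> carrier G"
    using d e y D_carrier by auto
  have ee: "e \<otimes> e = \<one>" using e D_involution by auto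
  have conj_e: "commute G (e \<otimes> d \<otimes> e) y \<longleftrightarrow> commute G d (e \<otimes> y \<otimes> e)"
    by (rule commute_involution_conj_iff[OF dc yc ec ee])
  have empty: "commute G a b \<Longrightarrow> basis_prod G a b = {}" for a b
    by (simp add: basis_prod_def)
  show ?thesis
  proof (cases "commute G d e"; cases "commute G e y")
    assume "commute G d e" "commute G e y"
    then show ?thesis by (simp add: empty)
  next
    assume de: "commute G d e" and ey: "\<not> commute G e y"
    then have "e \<otimes> d \<otimes> e = d"
      using involution_conj_eq_if_commute[OF ec dc ee] by (simp add: commute_sym)
    then have "noncomm d y = noncomm d (y \<otimes> e \<otimes> y)"
      using conj_e braid_D[OF e y ey] by simp
    with de show ?thesis by (simp add: empty sum_basis_prod_not_commute[OF e y ey])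
  next
    assume de: "\<not> commute G d e" and ey: "commute G e y"
    then have "noncomm (e \<otimes> d \<otimes> e) y = noncomm d y"
      using conj_e involution_conj_eq_if_commute[OF ec yc ee] by simp
    with ey show ?thesis by (simp add: empty sum_basis_prod_not_commute[OF d e de])
  next
    assume de: "\<not> commute G d e" and ey: "\<not> commute G e y"
    have "noncomm (e \<otimes> d \<otimes> e) y = noncomm d (y \<otimes> e \<otimes> y)"
      using conj_e braid_D[OF e y ey] by simp
    with de ey show ?thesis
      by (simp add: sum_basis_prod_not_commute[OF d e de] sum_basis_prod_not_commute[OF e y ey]
          commute_sym[of G e d] commute_sym[of G e y])
  qed
qed

lemma algA_prod_mem_algA:
  assumes u: "u \<in> algA D" and w: "w \<in> algA D"
  shows "algA_prod G u w \<in> algA D"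
proof -
  have "algA_prod G u w \<subseteq> D"
    using algA_prod_subset[of G u w] basis_prod_subset_D u w by (fastforce simp: algA_def)
  moreover have "finite (algA_prod G u w)"
    using u w by (intro finite_algA_prod) (auto simp: algA_def)
  ultimately show ?thesis by (simp add: algA_def)
qed

lemma algA_prod_commute:
  assumes u: "u \<in> algA D" and w: "w \<in> algA D"
  shows "algA_prod G u w = algA_prod G w u"
proof -
  have f: "finite u" "finite w" using u w by (auto simp: algA_def)
  have "(of_bool (x \<in> algA_prod G u w) :: bit) = of_bool (x \<in> algA_prod G w u)" for x
  proof -
    have "(of_bool (x \<in> algA_prod G u w) :: bit)
        = (\<Sum>e\<in>w. \<Sum>d\<in>u. of_bool (x \<in> basis_prod G d e))"
      by (simp only: of_bool_mem_algA_prod[OF f] sum.swap[of _ u])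
    also have "\<dots> = (\<Sum>e\<in>w. \<Sum>d\<in>u. of_bool (x \<in> basis_prod G e d))"
    proof (rule sum.cong[OF refl], rule sum.cong[OF refl])
      fix e d assume "e \<in> w" "d \<in> u"
      with u w have "d \<in> D" "e \<in> D" by (auto simp: algA_def)
      then show "(of_bool (x \<in> basis_prod G d e) :: bit) = of_bool (x \<in> basis_prod G e d)"
        by (simp add: basis_prod_commute)
    qed
    finally show ?thesis by (simp only: of_bool_mem_algA_prod[OF f(2,1)])
  qed
  then show ?thesis by (auto simp only: of_bool_bit_eq_iff)
qed

lemma form_algA_prod_assoc:
  assumes u: "u \<in> algA D" and w: "w \<in> algA D" and v: "v \<in> algA D"
  shows "form G (algA_prod G u w) v = form G u (algA_prod G w v)"
proof -
  have f: "finite u" "finite w" "finite v" using u w v by (auto simp: algA_def)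
  have "(of_bool (form G (algA_prod G u w) v) :: bit)
      = (\<Sum>d\<in>u. \<Sum>e\<in>w. \<Sum>x\<in>basis_prod G d e. \<Sum>y\<in>v. noncomm x y)"
    by (simp only: of_bool_form finite_algA_prod f sum_algA_prod)
  also have "\<dots> = (\<Sum>d\<in>u. \<Sum>e\<in>w. \<Sum>y\<in>v. \<Sum>z\<in>basis_prod G e y. noncomm d z)"
  proof (rule sum.cong[OF refl], rule sum.cong[OF refl])
    fix d e assume "d \<in> u" "e \<in> w"
    then have "d \<in> D" "e \<in> D" using u w by (auto simp: algA_def)
    then show "(\<Sum>x\<in>basis_prod G d e. \<Sum>y\<in>v. noncomm x y)
        = (\<Sum>y\<in>v. \<Sum>z\<in>basis_prod G e y. noncomm d z)"
      using v by (subst sum.swap) (intro sum.cong refl basis_form_assoc, auto simp: algA_def)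
  qed
  also have "\<dots> = of_bool (form G u (algA_prod G w v))"
    by (simp only: of_bool_form finite_algA_prod f sum_algA_prod)
  finally show ?thesis by (simp only: of_bool_bit_eq_iff)
qed

lemma radical_is_ideal: "is_ideal G D (radical G D)"
  unfolding is_ideal_def
proof (intro conjI ballI)
  show "radical G D \<subseteq> algA D" by (auto simp: radical_def)
  show "{} \<in> radical G D" by (auto simp: radical_def algA_def form_def)
next
  fix u w assume u: "u \<in> radical G D" and w: "w \<in> radical G D"
  then have "symdiff u w \<in> algA D" by (auto simp: radical_def algA_def symdiff_def)
  moreover have "\<not> form G (symdiff u w) v" if v: "v \<in> algA D" for v
    using form_symdiff_left[of u w v G] u w v by (auto simp: radical_def algA_def)
  ultimately show "symdiff u w \<in> radical G D" by (simp add: radical_def)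
next
  fix u w assume u: "u \<in> radical G D" and w: "w \<in> algA D"
  then have ua: "u \<in> algA D" by (simp add: radical_def)
  have "\<not> form G (algA_prod G u w) v" if v: "v \<in> algA D" for v
    using u algA_prod_mem_algA[OF w v] by (simp add: form_algA_prod_assoc[OF ua w v] radical_def)
  then show uw: "algA_prod G u w \<in> radical G D"
    using algA_prod_mem_algA[OF ua w] by (simp add: radical_def)
  show "algA_prod G w u \<in> radical G D"
    using uw by (simp add: algA_prod_commute[OF ua w])
qed

end

theorem corollary2p2:
  fixes G :: "('a, 'b) monoid_scheme" and D :: "'a set"
  assumes "group G"
    and "fischer_class G D"
  shows "is_ideal G D (radical G D)"
proof -
  interpret fischer G D using assms by (simp add: fischer_def fischer_axioms_def)
  show ?thesis by (rule radical_is_ideal)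
qed

end
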